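(* Let $\sigma=\begin{pmatrix}\frac13&0\\0&\frac23\end{pmatrix}$ and $D=\sigma\otimes\frac{I_3}{3}\in M_6$. There exists an extreme point of the convex set $\mathcal{CP}(M_6,M_6;D,D)$ with Choi rank $8$.
   Context: $M_n$ denotes the complex $n\times n$ matrices. For positive semidefinite $A\in M_{d_1}$, $B\in M_{d_2}$, $\mathcal{CP}(M_{d_1},M_{d_2};A,B)$ is the convex set of completely positive maps $\Phi:M_{d_1}\to M_{d_2}$ with $\Phi(I_{d_1})=B$ and $\Phi^*(I_{d_2})=A$ ($\Phi^*$ the Hilbert–Schmidt adjoint); equivalently $\Phi(X)=\sum_iK_iXK_i^\dagger$ with $\sum_iK_i^\dagger K_i=A$, $\sum_iK_iK_i^\dagger=B$. An extreme point of a convex set $\mathcal{K}$ is an element not expressible as $t\Phi_1+(1-t)\Phi_2$ with $t\in(0,1)$ and distinct $\Phi_1,\Phi_2\in\mathcal{K}$. The Choi rank of $\Phi$ is the rank of $\sum_{r,s}E_{rs}\otimes\Phi(E_{rs})$. *)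

theory Defs
  imports "Jordan_Normal_Form.Schur_Decomposition" "Jordan_Normal_Form.DL_Rank"
begin

text \<open>Complex matrices of M_n are elements of carrier_mat n n :: complex mat.
  Linear maps M_d1 -> M_d2 are represented as functions on complex mat, considered
  only on carrier_mat d1 d1.\<close>

definition kron_mat :: "complex mat \<Rightarrow> complex mat \<Rightarrow> complex mat" where
  "kron_mat A B = mat (dim_row A * dim_row B) (dim_col A * dim_col B)
     (\<lambda>(i, j). A $$ (i div dim_row B, j div dim_col B) * B $$ (i mod dim_row B, j mod dim_col B))"

definition mat_unit :: "nat \<Rightarrow> nat \<Rightarrow> nat \<Rightarrow> complex mat" where
  "mat_unit n r s = mat n n (\<lambda>(i, j). if i = r \<and> j = s then 1 else 0)"

definition sum_mats :: "nat \<Rightarrow> nat \<Rightarrow> complex mat list \<Rightarrow> complex mat" where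
  "sum_mats n m xs = foldr (+) xs (0\<^sub>m n m)"

definition kraus_map :: "nat \<Rightarrow> complex mat list \<Rightarrow> complex mat \<Rightarrow> complex mat" where
  "kraus_map d2 Ks X = sum_mats d2 d2 (map (\<lambda>K. K * X * mat_adjoint K) Ks)"

text \<open>CP(M_d1, M_d2; A, B): completely positive maps with Phi(I) = B and Phi^*(I) = A,
  via the Kraus representation given in the paper.\<close>
definition CP_set :: "nat \<Rightarrow> nat \<Rightarrow> complex mat \<Rightarrow> complex mat \<Rightarrow> (complex mat \<Rightarrow> complex mat) set" where
  "CP_set d1 d2 A B = {\<Phi>. \<exists>Ks. (\<forall>K\<in>set Ks. K \<in> carrier_mat d2 d1) \<and>
        (\<forall>X\<in>carrier_mat d1 d1. \<Phi> X = kraus_map d2 Ks X) \<and>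
        sum_mats d1 d1 (map (\<lambda>K. mat_adjoint K * K) Ks) = A \<and>
        sum_mats d2 d2 (map (\<lambda>K. K * mat_adjoint K) Ks) = B}"

text \<open>Extreme point of a set of maps M_d1 -> M_d2 (maps identified when they agree on M_d1).\<close>
definition extreme_map :: "nat \<Rightarrow> (complex mat \<Rightarrow> complex mat) set \<Rightarrow> (complex mat \<Rightarrow> complex mat) \<Rightarrow> bool" where
  "extreme_map d1 S \<Phi> \<longleftrightarrow> \<Phi> \<in> S \<and>
     \<not> (\<exists>t::real. \<exists>\<Phi>1\<in>S. \<exists>\<Phi>2\<in>S. 0 < t \<and> t < 1 \<and>
          (\<exists>X\<in>carrier_mat d1 d1. \<Phi>1 X \<noteq> \<Phi>2 X) \<and>
          (\<forall>X\<in>carrier_mat d1 d1. \<Phi> X = complex_of_real t \<cdot>\<^sub>m \<Phi>1 X + complex_of_real (1 - t) \<cdot>\<^sub>m \<Phi>2 X))"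

definition choi_mat :: "nat \<Rightarrow> nat \<Rightarrow> (complex mat \<Rightarrow> complex mat) \<Rightarrow> complex mat" where
  "choi_mat d1 d2 \<Phi> = sum_mats (d1*d2) (d1*d2) (map (\<lambda>(r, s). kron_mat (mat_unit d1 r s) (\<Phi> (mat_unit d1 r s)))
       (List.product [0..<d1] [0..<d1]))"

definition choi_rank :: "nat \<Rightarrow> nat \<Rightarrow> (complex mat \<Rightarrow> complex mat) \<Rightarrow> nat" where
  "choi_rank d1 d2 \<Phi> = vec_space.rank (d1 * d2) (choi_mat d1 d2 \<Phi>)"

definition sigma_mat :: "complex mat" where
  "sigma_mat = mat 2 2 (\<lambda>(i, j). if i = 0 \<and> j = 0 then 1/3 else if i = 1 \<and> j = 1 then 2/3 else 0)"

definition D_mat :: "complex mat" where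
  "D_mat = kron_mat sigma_mat ((1/3) \<cdot>\<^sub>m 1\<^sub>m 3)"

end

theory Submission
  imports Defs
begin

text \<open>Colour the cells of the \<open>6 \<times> 6\<close> grid with eight colours, leaving some cells blank, so
  that each colour class meets every row and every column at most once, and let \<open>K\<^sub>a\<close> carry
  \<open>sqrt (w r c)\<close> on the cells \<open>(r, c)\<close> of colour \<open>a\<close>. Then \<open>\<Sum> K\<^sub>a\<^sup>* K\<^sub>a\<close> and
  \<open>\<Sum> K\<^sub>a K\<^sub>a\<^sup>*\<close> are the diagonal matrices of column and row sums of \<open>w\<close> (here both \<open>D\<close>),
  and the \<open>K\<^sub>a\<close> have disjoint supports, so the Choi rank is 8.

  If \<open>\<Phi> = t \<Phi>\<^sub>1 + (1 - t) \<Phi>\<^sub>2\<close>, the Choi matrix of \<open>\<Phi>\<^sub>1\<close> is dominated by that of \<open>\<Phi>\<close>, so each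
  Kraus operator of \<open>\<Phi>\<^sub>1\<close> vanishes on blank cells and is proportional to \<open>K\<^sub>a\<close> on the class
  of \<open>a\<close>; the Choi matrix of \<open>\<Phi>\<^sub>1\<close> is then given by the Gram matrix \<open>g\<close> of these factors.
  As the coloured cells contain no rectangle, two colours sharing a row or a column produce an
  isolated off-diagonal term of a marginal, whence \<open>g\<^sub>a\<^sub>b = 0\<close>; the diagonal of the marginals is
  a linear system for the \<open>g\<^sub>a\<^sub>a\<close> whose only solution is \<open>1\<close>. Hence \<open>\<Phi>\<^sub>1 = \<Phi>\<close>.\<close>

section \<open>Kraus maps and their Choi tensor\<close>

lemma sum_list_mult_cnj: "(\<Sum>x\<leftarrow>xs. f x * cnj (f x)) = of_real (\<Sum>x\<leftarrow>xs. (cmod (f x))\<^sup>2)"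
  by (induction xs) (simp_all add: complex_norm_square del: of_real_power)

lemma sum_lessThan_single:
  fixes f :: "nat \<Rightarrow> 'a::comm_monoid_add"
  assumes "r < n" "\<And>i. i < n \<Longrightarrow> i \<noteq> r \<Longrightarrow> f i = 0"
  shows "(\<Sum>i<n. f i) = f r"
proof -
  have "(\<Sum>i<n. f i) = f r + (\<Sum>i\<in>{..<n} - {r}. f i)"
    using assms(1) by (simp add: sum.remove)
  also have "(\<Sum>i\<in>{..<n} - {r}. f i) = 0"
    using assms(2) by (intro sum.neutral) auto
  finally show ?thesis by simp
qed

lemma sum_mats_Cons: "sum_mats n m (A # As) = A + sum_mats n m As"
  by (simp add: sum_mats_def)

lemma sum_mats_dim [simp]: "dim_row (sum_mats n m As) = n" "dim_col (sum_mats n m As) = m"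
  by (induction As) (simp_all add: sum_mats_def)

lemma sum_mats_index:
  "i < n \<Longrightarrow> j < m \<Longrightarrow> sum_mats n m As $$ (i, j) = (\<Sum>A\<leftarrow>As. A $$ (i, j))"
proof (induction As)
  case Nil
  then show ?case by (simp add: sum_mats_def)
next
  case (Cons A As)
  then show ?case by (simp add: sum_mats_Cons)
qed

lemma mat_adjoint_dim [simp]:
  "dim_row (mat_adjoint A) = dim_col A" "dim_col (mat_adjoint A) = dim_row A"
  by (simp_all add: mat_adjoint_def mat_of_rows_def)

lemma mat_adjoint_index [simp]:
  "i < dim_col A \<Longrightarrow> j < dim_row A \<Longrightarrow> mat_adjoint A $$ (i, j) = cnj (A $$ (j, i))"
  by (simp add: mat_adjoint_def mat_of_rows_def)

lemma mat_unit_dim [simp]: "dim_row (mat_unit n r s) = n" "dim_col (mat_unit n r s) = n"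
  by (simp_all add: mat_unit_def)

lemma mat_unit_carrier [simp]: "mat_unit n r s \<in> carrier_mat n n"
  by (simp add: mat_unit_def)

lemma mat_unit_index [simp]:
  "k < n \<Longrightarrow> l < n \<Longrightarrow> mat_unit n r s $$ (k, l) = (if k = r \<and> l = s then 1 else 0)"
  by (simp add: mat_unit_def)

lemma kraus_map_dim [simp]: "dim_row (kraus_map d Ks X) = d" "dim_col (kraus_map d Ks X) = d"
  by (simp_all add: kraus_map_def)

text \<open>\<open>choi_tensor Ks i k j l\<close> is the coefficient of \<open>X $$ (k, l)\<close> in \<open>kraus_map d Ks X $$ (i, j)\<close>,
  i.e. the entry of the Choi matrix at row \<open>(k, i)\<close> and column \<open>(l, j)\<close>.\<close>
definition choi_tensor :: "complex mat list \<Rightarrow> nat \<Rightarrow> nat \<Rightarrow> nat \<Rightarrow> nat \<Rightarrow> complex" where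
  "choi_tensor Ks i k j l = (\<Sum>K\<leftarrow>Ks. K $$ (i, k) * cnj (K $$ (j, l)))"

lemma choi_tensor_Cons:
  "choi_tensor (K # Ks) i k j l = K $$ (i, k) * cnj (K $$ (j, l)) + choi_tensor Ks i k j l"
  by (simp add: choi_tensor_def)

lemma kraus_term_index:
  assumes K: "K \<in> carrier_mat d2 d1" and X: "X \<in> carrier_mat d1 d1" and "i < d2" "j < d2"
  shows "(K * X * mat_adjoint K) $$ (i, j)
    = (\<Sum>k<d1. \<Sum>l<d1. X $$ (k, l) * (K $$ (i, k) * cnj (K $$ (j, l))))"
proof -
  have "(K * X * mat_adjoint K) $$ (i, j)
      = (\<Sum>l<d1. (\<Sum>k<d1. K $$ (i, k) * X $$ (k, l)) * cnj (K $$ (j, l)))"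
    using assms by (simp add: scalar_prod_def atLeast0LessThan)
  also have "\<dots> = (\<Sum>l<d1. \<Sum>k<d1. X $$ (k, l) * (K $$ (i, k) * cnj (K $$ (j, l))))"
    unfolding sum_distrib_right by (simp add: mult_ac)
  also have "\<dots> = (\<Sum>k<d1. \<Sum>l<d1. X $$ (k, l) * (K $$ (i, k) * cnj (K $$ (j, l))))"
    by (rule sum.swap)
  finally show ?thesis .
qed

lemma kraus_map_Cons:
  "kraus_map d (K # Ks) X = K * X * mat_adjoint K + kraus_map d Ks X"
  by (simp add: kraus_map_def sum_mats_Cons)

lemma kraus_map_index:
  assumes "\<forall>K\<in>set Ks. K \<in> carrier_mat d2 d1" and X: "X \<in> carrier_mat d1 d1" and ij: "i < d2" "j < d2"
  shows "kraus_map d2 Ks X $$ (i, j) = (\<Sum>k<d1. \<Sum>l<d1. X $$ (k, l) * choi_tensor Ks i k j l)"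
  using assms(1)
proof (induction Ks)
  case Nil
  then show ?case using ij by (simp add: kraus_map_def sum_mats_def choi_tensor_def)
next
  case (Cons K Ks)
  have "kraus_map d2 (K # Ks) X $$ (i, j) = (K * X * mat_adjoint K) $$ (i, j) + kraus_map d2 Ks X $$ (i, j)"
    using ij by (simp add: kraus_map_Cons)
  also have "\<dots> = (\<Sum>k<d1. \<Sum>l<d1. X $$ (k, l) * (K $$ (i, k) * cnj (K $$ (j, l))))
      + (\<Sum>k<d1. \<Sum>l<d1. X $$ (k, l) * choi_tensor Ks i k j l)"
    using Cons kraus_term_index[OF _ X ij] by simp
  also have "\<dots> = (\<Sum>k<d1. \<Sum>l<d1. X $$ (k, l) * choi_tensor (K # Ks) i k j l)"
    by (simp add: choi_tensor_Cons distrib_left sum.distrib)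
  finally show ?case .
qed

lemma kraus_map_mat_unit:
  assumes "\<forall>K\<in>set Ks. K \<in> carrier_mat d2 d1" "i < d2" "j < d2" "k < d1" "l < d1"
  shows "kraus_map d2 Ks (mat_unit d1 k l) $$ (i, j) = choi_tensor Ks i k j l"
proof -
  have "kraus_map d2 Ks (mat_unit d1 k l) $$ (i, j)
      = (\<Sum>k'<d1. \<Sum>l'<d1. if k' = k \<and> l' = l then choi_tensor Ks i k' j l' else 0)"
    using assms by (simp add: kraus_map_index) (intro sum.cong refl, simp)
  also have "\<dots> = (\<Sum>k'<d1. if k' = k then (\<Sum>l'<d1. if l' = l then choi_tensor Ks i k' j l' else 0) else 0)"
    by (intro sum.cong refl) auto
  also have "\<dots> = choi_tensor Ks i k j l"
    using assms(4,5) by simp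
  finally show ?thesis .
qed

lemma kraus_map_eqI:
  assumes "\<forall>K\<in>set Ks. K \<in> carrier_mat d2 d1" "\<forall>K\<in>set Ls. K \<in> carrier_mat d2 d1"
    and "X \<in> carrier_mat d1 d1"
    and "\<And>i k j l. i < d2 \<Longrightarrow> k < d1 \<Longrightarrow> j < d2 \<Longrightarrow> l < d1 \<Longrightarrow>
      choi_tensor Ks i k j l = choi_tensor Ls i k j l"
  shows "kraus_map d2 Ks X = kraus_map d2 Ls X"
proof (rule eq_matI)
  fix i j assume "i < dim_row (kraus_map d2 Ls X)" "j < dim_col (kraus_map d2 Ls X)"
  then show "kraus_map d2 Ks X $$ (i, j) = kraus_map d2 Ls X $$ (i, j)"
    using kraus_map_index[OF assms(1,3)] kraus_map_index[OF assms(2,3)] by (simp add: assms(4))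
qed simp_all

lemma sum_adjoint_mult_index:
  assumes "\<forall>K\<in>set Ks. K \<in> carrier_mat d2 d1" and kl: "k < d1" "l < d1"
  shows "sum_mats d1 d1 (map (\<lambda>K. mat_adjoint K * K) Ks) $$ (k, l) = (\<Sum>i<d2. choi_tensor Ks i l i k)"
  using assms(1)
proof (induction Ks)
  case Nil
  then show ?case using kl by (simp add: sum_mats_index choi_tensor_def)
next
  case (Cons K Ks)
  then have "K \<in> carrier_mat d2 d1" by simp
  then have "(mat_adjoint K * K) $$ (k, l) = (\<Sum>i<d2. cnj (K $$ (i, k)) * K $$ (i, l))"
    using kl by (simp add: scalar_prod_def atLeast0LessThan)
  also have "\<dots> = (\<Sum>i<d2. K $$ (i, l) * cnj (K $$ (i, k)))"
    by (simp add: mult.commute)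
  finally have "sum_mats d1 d1 (map (\<lambda>K. mat_adjoint K * K) (K # Ks)) $$ (k, l)
      = (\<Sum>i<d2. K $$ (i, l) * cnj (K $$ (i, k))) + (\<Sum>i<d2. choi_tensor Ks i l i k)"
    using Cons kl by (simp add: sum_mats_Cons)
  then show ?case
    by (simp add: choi_tensor_Cons sum.distrib)
qed

lemma sum_mult_adjoint_index:
  assumes "\<forall>K\<in>set Ks. K \<in> carrier_mat d2 d1" and ij: "i < d2" "j < d2"
  shows "sum_mats d2 d2 (map (\<lambda>K. K * mat_adjoint K) Ks) $$ (i, j) = (\<Sum>k<d1. choi_tensor Ks i k j k)"
  using assms(1)
proof (induction Ks)
  case Nil
  then show ?case using ij by (simp add: sum_mats_index choi_tensor_def)
next
  case (Cons K Ks)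
  then have "K \<in> carrier_mat d2 d1" by simp
  then have "(K * mat_adjoint K) $$ (i, j) = (\<Sum>k<d1. K $$ (i, k) * cnj (K $$ (j, k)))"
    using ij by (simp add: scalar_prod_def atLeast0LessThan)
  then have "sum_mats d2 d2 (map (\<lambda>K. K * mat_adjoint K) (K # Ks)) $$ (i, j)
      = (\<Sum>k<d1. K $$ (i, k) * cnj (K $$ (j, k))) + (\<Sum>k<d1. choi_tensor Ks i k j k)"
    using Cons ij by (simp add: sum_mats_Cons)
  then show ?case
    by (simp add: choi_tensor_Cons sum.distrib)
qed

section \<open>Extreme points\<close>

definition choi_mixture ::
    "nat \<Rightarrow> nat \<Rightarrow> complex mat list \<Rightarrow> real \<Rightarrow> complex mat list \<Rightarrow> complex mat list \<Rightarrow> bool" where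
  "choi_mixture d1 d2 Ks t Ls Ls' \<longleftrightarrow> (\<forall>i<d2. \<forall>k<d1. \<forall>j<d2. \<forall>l<d1.
     choi_tensor Ks i k j l = of_real t * choi_tensor Ls i k j l + of_real (1 - t) * choi_tensor Ls' i k j l)"

lemma choi_mixture_swap: "choi_mixture d1 d2 Ks t Ls Ls' \<Longrightarrow> choi_mixture d1 d2 Ks (1 - t) Ls' Ls"
  by (simp add: choi_mixture_def add.commute)

lemma choi_mixtureI:
  assumes Ks: "\<forall>K\<in>set Ks. K \<in> carrier_mat d2 d1"
    and Ls: "\<forall>K\<in>set Ls. K \<in> carrier_mat d2 d1" and Ls': "\<forall>K\<in>set Ls'. K \<in> carrier_mat d2 d1"
    and mix: "\<forall>X\<in>carrier_mat d1 d1. kraus_map d2 Ks X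
      = of_real t \<cdot>\<^sub>m kraus_map d2 Ls X + of_real (1 - t) \<cdot>\<^sub>m kraus_map d2 Ls' X"
  shows "choi_mixture d1 d2 Ks t Ls Ls'"
  unfolding choi_mixture_def
proof (intro allI impI)
  fix i k j l assume ikjl: "i < d2" "k < d1" "j < d2" "l < d1"
  have "kraus_map d2 Ks (mat_unit d1 k l) $$ (i, j) = (of_real t \<cdot>\<^sub>m kraus_map d2 Ls (mat_unit d1 k l)
      + of_real (1 - t) \<cdot>\<^sub>m kraus_map d2 Ls' (mat_unit d1 k l)) $$ (i, j)"
    using mix by simp
  then show "choi_tensor Ks i k j l = of_real t * choi_tensor Ls i k j l + of_real (1 - t) * choi_tensor Ls' i k j l"
    using ikjl by (simp add: kraus_map_mat_unit[OF Ks] kraus_map_mat_unit[OF Ls] kraus_map_mat_unit[OF Ls'])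
qed

lemma kraus_map_in_CP_set:
  assumes "\<forall>K\<in>set Ks. K \<in> carrier_mat d2 d1"
    and "sum_mats d1 d1 (map (\<lambda>K. mat_adjoint K * K) Ks) = A"
    and "sum_mats d2 d2 (map (\<lambda>K. K * mat_adjoint K) Ks) = B"
  shows "kraus_map d2 Ks \<in> CP_set d1 d2 A B"
  unfolding CP_set_def using assms by blast

lemma extreme_CP_setI:
  assumes Ks: "\<forall>K\<in>set Ks. K \<in> carrier_mat d2 d1"
    and in_CP: "kraus_map d2 Ks \<in> CP_set d1 d2 A B"
    and face: "\<And>Ls Ls' t. \<forall>K\<in>set Ls. K \<in> carrier_mat d2 d1 \<Longrightarrow>
      sum_mats d1 d1 (map (\<lambda>K. mat_adjoint K * K) Ls) = A \<Longrightarrow>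
      sum_mats d2 d2 (map (\<lambda>K. K * mat_adjoint K) Ls) = B \<Longrightarrow>
      0 < t \<Longrightarrow> t < 1 \<Longrightarrow> choi_mixture d1 d2 Ks t Ls Ls' \<Longrightarrow>
      \<forall>i<d2. \<forall>k<d1. \<forall>j<d2. \<forall>l<d1. choi_tensor Ls i k j l = choi_tensor Ks i k j l"
  shows "extreme_map d1 (CP_set d1 d2 A B) (kraus_map d2 Ks)"
  unfolding extreme_map_def
proof (intro conjI notI)
  show "kraus_map d2 Ks \<in> CP_set d1 d2 A B" by (fact in_CP)
next
  assume "\<exists>t. \<exists>\<Phi>1\<in>CP_set d1 d2 A B. \<exists>\<Phi>2\<in>CP_set d1 d2 A B. 0 < t \<and> t < 1 \<and>
    (\<exists>X\<in>carrier_mat d1 d1. \<Phi>1 X \<noteq> \<Phi>2 X) \<and>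
    (\<forall>X\<in>carrier_mat d1 d1. kraus_map d2 Ks X = of_real t \<cdot>\<^sub>m \<Phi>1 X + of_real (1 - t) \<cdot>\<^sub>m \<Phi>2 X)"
  then obtain t \<Phi>1 \<Phi>2 X where "\<Phi>1 \<in> CP_set d1 d2 A B" "\<Phi>2 \<in> CP_set d1 d2 A B" and t: "0 < t" "t < 1"
    and X: "X \<in> carrier_mat d1 d1" "\<Phi>1 X \<noteq> \<Phi>2 X"
    and mix: "\<forall>X\<in>carrier_mat d1 d1. kraus_map d2 Ks X = of_real t \<cdot>\<^sub>m \<Phi>1 X + of_real (1 - t) \<cdot>\<^sub>m \<Phi>2 X"
    by blast
  then obtain Ls1 Ls2 where Ls1: "\<forall>K\<in>set Ls1. K \<in> carrier_mat d2 d1"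
    "\<forall>X\<in>carrier_mat d1 d1. \<Phi>1 X = kraus_map d2 Ls1 X"
    "sum_mats d1 d1 (map (\<lambda>K. mat_adjoint K * K) Ls1) = A"
    "sum_mats d2 d2 (map (\<lambda>K. K * mat_adjoint K) Ls1) = B"
    and Ls2: "\<forall>K\<in>set Ls2. K \<in> carrier_mat d2 d1"
    "\<forall>X\<in>carrier_mat d1 d1. \<Phi>2 X = kraus_map d2 Ls2 X"
    "sum_mats d1 d1 (map (\<lambda>K. mat_adjoint K * K) Ls2) = A"
    "sum_mats d2 d2 (map (\<lambda>K. K * mat_adjoint K) Ls2) = B"
    unfolding CP_set_def by blast
  have mix12: "choi_mixture d1 d2 Ks t Ls1 Ls2"
    by (rule choi_mixtureI[OF Ks Ls1(1) Ls2(1)]) (use mix Ls1(2) Ls2(2) in simp)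
  have G1: "\<forall>i<d2. \<forall>k<d1. \<forall>j<d2. \<forall>l<d1. choi_tensor Ls1 i k j l = choi_tensor Ks i k j l"
    by (rule face[OF Ls1(1,3,4) t mix12])
  have G2: "\<forall>i<d2. \<forall>k<d1. \<forall>j<d2. \<forall>l<d1. choi_tensor Ls2 i k j l = choi_tensor Ks i k j l"
    by (rule face[OF Ls2(1,3,4) _ _ choi_mixture_swap[OF mix12]]) (use t in simp_all)
  have "\<Phi>1 X = kraus_map d2 Ls1 X" using Ls1(2) X(1) by simp
  also have "\<dots> = kraus_map d2 Ls2 X"
    by (rule kraus_map_eqI[OF Ls1(1) Ls2(1) X(1)]) (simp add: G1 G2)
  also have "\<dots> = \<Phi>2 X" using Ls2(2) X(1) by simp
  finally show False using X(2) by simp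
qed

text \<open>The quadratic form of the Choi matrix at the vector with entry \<open>x\<close> at \<open>(k, i)\<close>, entry
  \<open>-y\<close> at \<open>(l, j)\<close> and zeros elsewhere.\<close>
definition choi_pair_form :: "complex mat list \<Rightarrow> real \<Rightarrow> nat \<Rightarrow> nat \<Rightarrow> real \<Rightarrow> nat \<Rightarrow> nat \<Rightarrow> complex" where
  "choi_pair_form Ks x i k y j l = of_real (x\<^sup>2) * choi_tensor Ks i k i k
     - of_real (x * y) * (choi_tensor Ks i k j l + choi_tensor Ks j l i k) + of_real (y\<^sup>2) * choi_tensor Ks j l j l"

lemma choi_pair_form_sum_squares:
  "choi_pair_form Ks x i k y j l = of_real (\<Sum>K\<leftarrow>Ks. (cmod (of_real x * K $$ (i, k) - of_real y * K $$ (j, l)))\<^sup>2)"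
proof (induction Ks)
  case Nil
  then show ?case by (simp add: choi_pair_form_def choi_tensor_def)
next
  case (Cons K Ks)
  define a where "a = K $$ (i, k)"
  define b where "b = K $$ (j, l)"
  have "complex_of_real ((cmod (of_real x * a - of_real y * b))\<^sup>2)
     = of_real (x\<^sup>2) * (a * cnj a) - of_real (x * y) * (a * cnj b + b * cnj a) + of_real (y\<^sup>2) * (b * cnj b)"
    unfolding complex_norm_square by (simp add: algebra_simps power2_eq_square)
  then have "choi_pair_form (K # Ks) x i k y j l
     = of_real ((cmod (of_real x * a - of_real y * b))\<^sup>2) + choi_pair_form Ks x i k y j l"
    by (simp add: choi_pair_form_def choi_tensor_Cons a_def b_def algebra_simps)
  with Cons show ?case by (simp add: a_def b_def del: of_real_power)
qed

lemma choi_pair_form_mixture: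
  assumes "choi_mixture d1 d2 Ks t Ls Ls'" "i < d2" "k < d1" "j < d2" "l < d1"
  shows "choi_pair_form Ks x i k y j l
    = of_real t * choi_pair_form Ls x i k y j l + of_real (1 - t) * choi_pair_form Ls' x i k y j l"
proof -
  have mix: "choi_tensor Ks a b c e = of_real t * choi_tensor Ls a b c e + of_real (1 - t) * choi_tensor Ls' a b c e"
    if "a < d2" "b < d1" "c < d2" "e < d1" for a b c e
    using assms(1) that unfolding choi_mixture_def by blast
  show ?thesis
    unfolding choi_pair_form_def mix[OF assms(2-5)] mix[OF assms(4,5,2,3)] mix[OF assms(2,3,2,3)]
      mix[OF assms(4,5,4,5)]
    by (simp add: algebra_simps)
qed

text \<open>Vanishing of a positive semidefinite form is inherited by the summands of a convex
  combination.\<close>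
lemma choi_pair_form_face:
  assumes mix: "choi_mixture d1 d2 Ks t Ls Ls'" and t: "0 < t" "t < 1"
    and idx: "i < d2" "k < d1" "j < d2" "l < d1"
    and zero: "choi_pair_form Ks x i k y j l = 0" and K: "K \<in> set Ls"
  shows "of_real x * K $$ (i, k) = of_real y * K $$ (j, l)"
proof -
  define f where "f = (\<lambda>K. (cmod (of_real x * K $$ (i, k) - of_real y * K $$ (j, l)))\<^sup>2)"
  have "complex_of_real (t * sum_list (map f Ls) + (1 - t) * sum_list (map f Ls')) = 0"
    using choi_pair_form_mixture[OF mix idx, of x y] zero
    unfolding choi_pair_form_sum_squares f_def by simp
  then have "t * sum_list (map f Ls) + (1 - t) * sum_list (map f Ls') = 0"
    by (simp only: of_real_eq_0_iff)
  moreover have "0 \<le> sum_list (map f Ls)" "0 \<le> sum_list (map f Ls')"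
    by (auto intro!: sum_list_nonneg simp: f_def)
  ultimately have "sum_list (map f Ls) = 0"
    using t by (smt (verit) mult_nonneg_nonneg mult_pos_pos)
  moreover have "\<forall>v\<in>set (map f Ls). 0 \<le> v" by (simp add: f_def)
  ultimately have "f K = 0"
    using K sum_list_nonneg_eq_0_iff[of "map f Ls"] by auto
  then show ?thesis by (simp add: f_def)
qed

section \<open>Choi rank\<close>

lemma choi_mat_dim [simp]:
  "dim_row (choi_mat d1 d2 \<Phi>) = d1 * d2" "dim_col (choi_mat d1 d2 \<Phi>) = d1 * d2"
  by (simp_all add: choi_mat_def)

lemma choi_mat_kraus_index:
  assumes Ks: "\<forall>K\<in>set Ks. K \<in> carrier_mat d2 d1" and IJ: "I < d1 * d2" "J < d1 * d2"
  shows "choi_mat d1 d2 (kraus_map d2 Ks) $$ (I, J)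
    = choi_tensor Ks (I mod d2) (I div d2) (J mod d2) (J div d2)"
proof -
  let ?E = "\<lambda>(r, s). kron_mat (mat_unit d1 r s) (kraus_map d2 Ks (mat_unit d1 r s)) $$ (I, J)"
  let ?P = "List.product [0..<d1] [0..<d1]"
  have d2: "0 < d2" using IJ by (cases d2) auto
  then have d: "I div d2 < d1" "J div d2 < d1" "I mod d2 < d2" "J mod d2 < d2"
    using IJ by (auto simp: less_mult_imp_div_less mult.commute)
  have E: "?E rs = (if rs = (I div d2, J div d2)
      then choi_tensor Ks (I mod d2) (I div d2) (J mod d2) (J div d2) else 0)"
    if "rs \<in> set ?P" for rs
    using that IJ d d2 by (auto simp: kron_mat_def kraus_map_mat_unit[OF Ks] split: if_splits)
  have "choi_mat d1 d2 (kraus_map d2 Ks) $$ (I, J) = (\<Sum>rs\<leftarrow>?P. ?E rs)"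
    unfolding choi_mat_def using IJ by (simp add: sum_mats_index comp_def case_prod_unfold)
  also have "\<dots> = (\<Sum>rs\<in>set ?P. ?E rs)"
    by (rule sum_list_distinct_conv_sum_set) (simp add: distinct_product)
  also have "\<dots> = choi_tensor Ks (I mod d2) (I div d2) (J mod d2) (J div d2)"
    using d by (simp add: E cong: sum.cong)
  finally show ?thesis .
qed

lemma rank_sum_mats_le:
  assumes "\<forall>A\<in>set As. A \<in> carrier_mat n n \<and> vec_space.rank n A \<le> 1"
  shows "vec_space.rank n (sum_mats n n As) \<le> length As"
  using assms
proof (induction As)
  case Nil
  then show ?case using vec_space.rank_0I[of n n] by (simp add: sum_mats_def)
next
  case (Cons A As)
  have "sum_mats n n As \<in> carrier_mat n n" by (simp add: carrier_matI)
  then have "vec_space.rank n (sum_mats n n (A # As)) \<le> vec_space.rank n A + vec_space.rank n (sum_mats n n As)"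
    using vec_space.rank_subadditive[of A n n] Cons.prems by (simp add: sum_mats_Cons)
  with Cons show ?case by simp
qed

text \<open>The Choi matrix is the sum of the rank-one matrices \<open>vec K (vec K)\<^sup>*\<close> over the Kraus operators.\<close>
lemma choi_rank_kraus_le:
  assumes Ks: "\<forall>K\<in>set Ks. K \<in> carrier_mat d2 d1"
  shows "choi_rank d1 d2 (kraus_map d2 Ks) \<le> length Ks"
proof -
  let ?N = "d1 * d2"
  define R where "R K = mat ?N ?N (\<lambda>(I, J). K $$ (I mod d2, I div d2) * cnj (K $$ (J mod d2, J div d2)))"
    for K :: "complex mat"
  have "choi_mat d1 d2 (kraus_map d2 Ks) = sum_mats ?N ?N (map R Ks)"
    by (rule eq_matI) (simp_all add: choi_mat_kraus_index[OF Ks] sum_mats_index R_def choi_tensor_def comp_def)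
  moreover have "vec_space.rank ?N (R K) \<le> 1" for K
    by (rule vec_space.rank_le_1_product_entries[of _ ?N ?N "\<lambda>I. K $$ (I mod d2, I div d2)"
          "\<lambda>J. cnj (K $$ (J mod d2, J div d2))"]) (auto simp: R_def)
  ultimately show ?thesis
    unfolding choi_rank_def using rank_sum_mats_le[of "map R Ks" ?N] by (auto simp: R_def)
qed

text \<open>If each Kraus operator has a private cell \<open>p a\<close>, where it alone is nonzero, the Choi matrix
  restricted to the rows and columns of these cells is diagonal with nonzero entries.\<close>
lemma choi_rank_kraus_ge:
  assumes Ks: "\<forall>K\<in>set Ks. K \<in> carrier_mat d2 d1"
    and cell: "\<And>a. a < length Ks \<Longrightarrow> fst (p a) < d2 \<and> snd (p a) < d1"
    and exclusive: "\<And>a b. a < length Ks \<Longrightarrow> b < length Ks \<Longrightarrow> Ks ! b $$ p a \<noteq> 0 \<longleftrightarrow> a = b"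
  shows "length Ks \<le> choi_rank d1 d2 (kraus_map d2 Ks)"
proof -
  let ?N = "d1 * d2" and ?m = "length Ks"
  interpret V: vec_space "TYPE(complex)" ?N .
  define C where "C = choi_mat d1 d2 (kraus_map d2 Ks)"
  have C: "C \<in> carrier_mat ?N ?N" by (simp add: C_def carrier_matI)
  define J where "J a = snd (p a) * d2 + fst (p a)" for a
  have J: "J a < ?N" "J a mod d2 = fst (p a)" "J a div d2 = snd (p a)" if "a < ?m" for a
  proof -
    have "snd (p a) * d2 + fst (p a) < (snd (p a) + 1) * d2" using cell[OF that] by simp
    also have "\<dots> \<le> ?N" using cell[OF that] by (intro mult_le_mono1) simp
    finally show "J a < ?N" by (simp add: J_def)
    show "J a mod d2 = fst (p a)" "J a div d2 = snd (p a)" using cell[OF that] by (simp_all add: J_def)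
  qed
  define c where "c a = Ks ! a $$ p a * cnj (Ks ! a $$ p a)" for a
  have c: "c a \<noteq> 0" if "a < ?m" for a
    using exclusive[OF that that] by (simp add: c_def)
  have C_cells: "C $$ (J b, J a) = (if a = b then c a else 0)" if ab: "a < ?m" "b < ?m" for a b
  proof -
    have "C $$ (J b, J a) = (\<Sum>e<?m. Ks ! e $$ p b * cnj (Ks ! e $$ p a))"
      using J[OF ab(1)] J[OF ab(2)]
      by (simp add: C_def choi_mat_kraus_index[OF Ks] choi_tensor_def sum_list_sum_nth atLeast0LessThan)
    also have "\<dots> = (\<Sum>e<?m. if e = a then (if a = b then c a else 0) else 0)"
      using exclusive ab by (intro sum.cong refl) (auto simp: c_def)
    finally show ?thesis using ab(1) by simp
  qed
  define u where "u a = col C (J a)" for a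
  have u: "u a $ J b = (if a = b then c a else 0)" if "a < ?m" "b < ?m" for a b
    using that C J C_cells by (simp add: u_def)
  have inj: "inj_on u {..<?m}"
    by (rule inj_onI) (use u c in \<open>metis lessThan_iff\<close>)
  have U_cols: "u ` {..<?m} \<subseteq> set (cols C)"
    using C J by (auto simp: u_def cols_def)
  then have U_carrier: "u ` {..<?m} \<subseteq> carrier_vec ?N"
    using C by (auto simp: cols_def)
  have "V.lin_indpt (u ` {..<?m})"
  proof (rule V.finite_lin_indpt2, goal_cases)
    case (3 x)
    show ?case
    proof
      fix v assume "v \<in> u ` {..<?m}"
      then obtain b where b: "b < ?m" "v = u b" by auto
      have "0 = V.lincomb x (u ` {..<?m}) $ J b" using 3(2) J[OF b(1)] by (simp add: class_ring_simps)
      also have "\<dots> = (\<Sum>a<?m. x (u a) * u a $ J b)"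
        by (simp add: V.lincomb_index[OF J(1)[OF b(1)] U_carrier] sum.reindex[OF inj])
      also have "\<dots> = (\<Sum>a<?m. if a = b then x (u b) * c b else 0)"
        using b u by (intro sum.cong refl) auto
      also have "\<dots> = x (u b) * c b"
        using b(1) by simp
      finally show "x v = 0" using c[OF b(1)] b by simp
    qed
  qed (use U_carrier in simp_all)
  then have "card (u ` {..<?m}) \<le> V.rank C"
    using V.rank_ge_card_indpt[OF C U_cols] by simp
  then show ?thesis
    using inj by (simp add: card_image choi_rank_def C_def)
qed

section \<open>Coloured grids\<close>

text \<open>Cells \<open>(r, c)\<close> with \<open>colour r c \<ge> m\<close> are blank.\<close>
locale coloured_grid =
  fixes n m :: nat and colour :: "nat \<Rightarrow> nat \<Rightarrow> nat" and w :: "nat \<Rightarrow> nat \<Rightarrow> real"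
  assumes weight_pos: "r < n \<Longrightarrow> c < n \<Longrightarrow> colour r c < m \<Longrightarrow> 0 < w r c"
    and colour_inj_row: "r < n \<Longrightarrow> c < n \<Longrightarrow> c' < n \<Longrightarrow> colour r c < m \<Longrightarrow> colour r c = colour r c' \<Longrightarrow> c = c'"
    and colour_inj_col: "r < n \<Longrightarrow> r' < n \<Longrightarrow> c < n \<Longrightarrow> colour r c < m \<Longrightarrow> colour r c = colour r' c \<Longrightarrow> r = r'"
    and no_rectangle: "r < n \<Longrightarrow> r' < n \<Longrightarrow> c < n \<Longrightarrow> c' < n \<Longrightarrow>
      colour r c < m \<Longrightarrow> colour r c' < m \<Longrightarrow> colour r' c < m \<Longrightarrow> colour r' c' < m \<Longrightarrow> r = r' \<or> c = c'"
    and colours_meet: "a < m \<Longrightarrow> b < m \<Longrightarrow>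
      (\<exists>r<n. \<exists>c<n. \<exists>c'<n. colour r c = a \<and> colour r c' = b) \<or>
      (\<exists>c<n. \<exists>r<n. \<exists>r'<n. colour r c = a \<and> colour r' c = b)"
    and weights_determine:
      "\<forall>c<n. (\<Sum>r<n. if colour r c < m then w r c * h (colour r c) else 0) = 0 \<Longrightarrow>
       \<forall>r<n. (\<Sum>c<n. if colour r c < m then w r c * h (colour r c) else 0) = 0 \<Longrightarrow> a < m \<Longrightarrow> h a = 0"
begin

definition kraus_op :: "nat \<Rightarrow> complex mat" where
  "kraus_op a = mat n n (\<lambda>(r, c). if colour r c = a then of_real (sqrt (w r c)) else 0)"

definition kraus_ops :: "complex mat list" where
  "kraus_ops = map kraus_op [0..<m]"

definition col_weight :: "nat \<Rightarrow> real" where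
  "col_weight c = (\<Sum>r<n. if colour r c < m then w r c else 0)"

definition row_weight :: "nat \<Rightarrow> real" where
  "row_weight r = (\<Sum>c<n. if colour r c < m then w r c else 0)"

lemma kraus_ops_carrier: "\<forall>K\<in>set kraus_ops. K \<in> carrier_mat n n"
  by (auto simp: kraus_ops_def kraus_op_def)

lemma length_kraus_ops [simp]: "length kraus_ops = m"
  by (simp add: kraus_ops_def)

lemma choi_tensor_kraus_ops:
  assumes "r < n" "c < n" "r' < n" "c' < n"
  shows "choi_tensor kraus_ops r c r' c' = (if colour r c < m \<and> colour r' c' = colour r c
    then of_real (sqrt (w r c) * sqrt (w r' c')) else 0)"
proof -
  have "choi_tensor kraus_ops r c r' c' = (\<Sum>a<m. (if colour r c = a then of_real (sqrt (w r c)) else 0)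
      * cnj (if colour r' c' = a then of_real (sqrt (w r' c')) else 0))"
    using assms by (simp add: choi_tensor_def kraus_ops_def kraus_op_def interv_sum_list_conv_sum_set_nat
        atLeast0LessThan)
  also have "\<dots> = (\<Sum>a<m. if a = colour r c then
      (if colour r' c' = colour r c then of_real (sqrt (w r c) * sqrt (w r' c')) else 0) else 0)"
    by (intro sum.cong refl) auto
  finally show ?thesis by simp
qed

lemma choi_tensor_kraus_ops_col:
  assumes r: "r < n" and kl: "k < n" "l < n"
  shows "choi_tensor kraus_ops r l r k = of_real (if k = l \<and> colour r l < m then w r l else 0)"
proof (cases "colour r l < m \<and> colour r k = colour r l")
  case True
  then have "k = l" using colour_inj_row[OF r kl(2) kl(1)] by metis
  then show ?thesis using True kl r weight_pos[OF r kl(2)] by (simp add: choi_tensor_kraus_ops)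
next
  case False
  then have "\<not> (k = l \<and> colour r l < m)" by blast
  with False show ?thesis
    by (simp only: choi_tensor_kraus_ops[OF r kl(2) r kl(1)] if_not_P[OF False] if_False of_real_0)
qed

lemma choi_tensor_kraus_ops_row:
  assumes ij: "i < n" "j < n" and k: "k < n"
  shows "choi_tensor kraus_ops i k j k = of_real (if i = j \<and> colour j k < m then w j k else 0)"
proof (cases "colour i k < m \<and> colour j k = colour i k")
  case True
  then have "i = j" using colour_inj_col[OF ij k] by metis
  then show ?thesis using True ij k weight_pos[OF ij(1) k] by (simp add: choi_tensor_kraus_ops)
next
  case False
  then have "\<not> (i = j \<and> colour j k < m)" by blast
  with False show ?thesis
    by (simp only: choi_tensor_kraus_ops[OF ij(1) k ij(2) k] if_not_P[OF False] if_False of_real_0)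
qed

lemma kraus_ops_in_CP_set:
  "kraus_map n kraus_ops \<in> CP_set n n (mat_diag n (\<lambda>c. of_real (col_weight c))) (mat_diag n (\<lambda>r. of_real (row_weight r)))"
proof (rule kraus_map_in_CP_set[OF kraus_ops_carrier])
  show "sum_mats n n (map (\<lambda>K. mat_adjoint K * K) kraus_ops) = mat_diag n (\<lambda>c. of_real (col_weight c))"
  proof (rule eq_matI)
    fix k l assume "k < dim_row (mat_diag n (\<lambda>c. complex_of_real (col_weight c)))"
      "l < dim_col (mat_diag n (\<lambda>c. complex_of_real (col_weight c)))"
    then have kl: "k < n" "l < n" by (simp_all add: mat_diag_def)
    have "sum_mats n n (map (\<lambda>K. mat_adjoint K * K) kraus_ops) $$ (k, l)
        = of_real (\<Sum>r<n. if k = l \<and> colour r l < m then w r l else 0)"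
      using kl by (simp add: sum_adjoint_mult_index[OF kraus_ops_carrier] choi_tensor_kraus_ops_col)
    then show "sum_mats n n (map (\<lambda>K. mat_adjoint K * K) kraus_ops) $$ (k, l)
        = mat_diag n (\<lambda>c. of_real (col_weight c)) $$ (k, l)"
      using kl by (cases "k = l") (simp_all add: mat_diag_def col_weight_def)
  qed (simp_all add: mat_diag_def)
  show "sum_mats n n (map (\<lambda>K. K * mat_adjoint K) kraus_ops) = mat_diag n (\<lambda>r. of_real (row_weight r))"
  proof (rule eq_matI)
    fix i j assume "i < dim_row (mat_diag n (\<lambda>r. complex_of_real (row_weight r)))"
      "j < dim_col (mat_diag n (\<lambda>r. complex_of_real (row_weight r)))"
    then have ij: "i < n" "j < n" by (simp_all add: mat_diag_def)
    have "sum_mats n n (map (\<lambda>K. K * mat_adjoint K) kraus_ops) $$ (i, j)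
        = of_real (\<Sum>k<n. if i = j \<and> colour j k < m then w j k else 0)"
      using ij by (simp add: sum_mult_adjoint_index[OF kraus_ops_carrier] choi_tensor_kraus_ops_row)
    then show "sum_mats n n (map (\<lambda>K. K * mat_adjoint K) kraus_ops) $$ (i, j)
        = mat_diag n (\<lambda>r. of_real (row_weight r)) $$ (i, j)"
      using ij by (cases "i = j") (simp_all add: mat_diag_def row_weight_def)
  qed (simp_all add: mat_diag_def)
qed

definition cell :: "nat \<Rightarrow> nat \<times> nat" where
  "cell a = (SOME (r, c). r < n \<and> c < n \<and> colour r c = a)"

lemma cell_coloured:
  assumes "a < m"
  shows "fst (cell a) < n \<and> snd (cell a) < n \<and> colour (fst (cell a)) (snd (cell a)) = a"
proof -
  from assms obtain r c where "r < n" "c < n" "colour r c = a"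
    using colours_meet[of a a] by blast
  then have "(\<lambda>(r, c). r < n \<and> c < n \<and> colour r c = a) (cell a)"
    unfolding cell_def by (intro someI[where P = "\<lambda>(r, c). r < n \<and> c < n \<and> colour r c = a" and x = "(r, c)"]) simp
  then show ?thesis by (simp add: case_prod_unfold)
qed

theorem choi_rank_kraus_ops: "choi_rank n n (kraus_map n kraus_ops) = m"
proof (rule antisym)
  show "choi_rank n n (kraus_map n kraus_ops) \<le> m"
    using choi_rank_kraus_le[OF kraus_ops_carrier] by simp
  have "length kraus_ops \<le> choi_rank n n (kraus_map n kraus_ops)"
  proof (rule choi_rank_kraus_ge[OF kraus_ops_carrier, of cell])
    fix a b assume ab: "a < length kraus_ops" "b < length kraus_ops"
    obtain r c where rc: "cell a = (r, c)" by fastforce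
    then show "kraus_ops ! b $$ cell a \<noteq> 0 \<longleftrightarrow> a = b"
      using ab cell_coloured[of a] weight_pos[of r c] by (auto simp: kraus_ops_def kraus_op_def)
  qed (use cell_coloured in simp)
  then show "m \<le> choi_rank n n (kraus_map n kraus_ops)" by simp
qed

lemma weights_eq_one:
  assumes col: "\<And>c. c < n \<Longrightarrow> (\<Sum>r<n. if colour r c < m then w r c * h (colour r c) else 0) = col_weight c"
    and row: "\<And>r. r < n \<Longrightarrow> (\<Sum>c<n. if colour r c < m then w r c * h (colour r c) else 0) = row_weight r"
    and a: "a < m"
  shows "h a = 1"
proof -
  have shift: "(if P then x * (y - 1) else 0) = (if P then x * y else 0) - (if P then x else 0)"
    for P and x y :: real
    by (simp add: algebra_simps)
  have "h a - 1 = 0"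
  proof (rule weights_determine[of "\<lambda>b. h b - 1"])
    show "\<forall>c<n. (\<Sum>r<n. if colour r c < m then w r c * (h (colour r c) - 1) else 0) = 0"
      using col by (simp add: shift sum_subtractf col_weight_def)
    show "\<forall>r<n. (\<Sum>c<n. if colour r c < m then w r c * (h (colour r c) - 1) else 0) = 0"
      using row by (simp add: shift sum_subtractf row_weight_def)
  qed (fact a)
  then show ?thesis by simp
qed

definition coeff :: "complex mat \<Rightarrow> nat \<Rightarrow> complex" where
  "coeff K a = K $$ cell a / of_real (sqrt (w (fst (cell a)) (snd (cell a))))"

definition coeff_gram :: "complex mat list \<Rightarrow> nat \<Rightarrow> nat \<Rightarrow> complex" where
  "coeff_gram Ls a b = (\<Sum>K\<leftarrow>Ls. coeff K a * cnj (coeff K b))"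

context
  fixes Ls Ls' :: "complex mat list" and t :: real
  assumes Ls: "\<forall>K\<in>set Ls. K \<in> carrier_mat n n"
    and marg_in: "sum_mats n n (map (\<lambda>K. mat_adjoint K * K) Ls) = mat_diag n (\<lambda>c. of_real (col_weight c))"
    and marg_out: "sum_mats n n (map (\<lambda>K. K * mat_adjoint K) Ls) = mat_diag n (\<lambda>r. of_real (row_weight r))"
    and t: "0 < t" "t < 1"
    and mix: "choi_mixture n n kraus_ops t Ls Ls'"
begin

lemma face_entry_uncoloured:
  assumes K: "K \<in> set Ls" and rc: "r < n" "c < n" "\<not> colour r c < m"
  shows "K $$ (r, c) = 0"
proof -
  have "choi_pair_form kraus_ops 1 r c 0 r c = 0"
    using rc by (simp add: choi_pair_form_def choi_tensor_kraus_ops)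
  from choi_pair_form_face[OF mix t rc(1,2) rc(1,2) this K] show ?thesis by simp
qed

lemma face_entries_same_colour:
  assumes K: "K \<in> set Ls" and idx: "r < n" "c < n" "r' < n" "c' < n"
    and col: "colour r c < m" "colour r' c' = colour r c"
  shows "of_real (sqrt (w r' c')) * K $$ (r, c) = of_real (sqrt (w r c)) * K $$ (r', c')"
proof -
  define p where "p = sqrt (w r c)"
  define q where "q = sqrt (w r' c')"
  have G: "choi_tensor kraus_ops r c r c = of_real (p * p)" "choi_tensor kraus_ops r c r' c' = of_real (p * q)"
    "choi_tensor kraus_ops r' c' r c = of_real (q * p)" "choi_tensor kraus_ops r' c' r' c' = of_real (q * q)"
    using idx col by (simp_all add: choi_tensor_kraus_ops p_def q_def)
  have "choi_pair_form kraus_ops q r c p r' c' = 0"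
    unfolding choi_pair_form_def G by (simp add: algebra_simps power2_eq_square)
  from choi_pair_form_face[OF mix t idx(1,2) idx(3,4) this K] show ?thesis
    by (simp add: p_def q_def)
qed

lemma face_entry:
  assumes K: "K \<in> set Ls" and rc: "r < n" "c < n"
  shows "K $$ (r, c) = (if colour r c < m then of_real (sqrt (w r c)) * coeff K (colour r c) else 0)"
proof (cases "colour r c < m")
  case True
  define a where "a = colour r c"
  obtain r0 c0 where cell_a: "cell a = (r0, c0)" by fastforce
  with True cell_coloured[of a] have r0c0: "r0 < n" "c0 < n" "colour r0 c0 = colour r c"
    by (simp_all add: a_def)
  have "sqrt (w r0 c0) \<noteq> 0"
    using weight_pos[of r0 c0] r0c0 True by simp
  moreover have "of_real (sqrt (w r0 c0)) * K $$ (r, c) = of_real (sqrt (w r c)) * K $$ (r0, c0)"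
    by (rule face_entries_same_colour[OF K rc r0c0(1,2) True r0c0(3)])
  ultimately show ?thesis
    using True cell_a by (simp add: coeff_def a_def field_simps)
next
  case False
  then show ?thesis using face_entry_uncoloured[OF K rc] by simp
qed

lemma face_choi_tensor:
  assumes idx: "r < n" "c < n" "r' < n" "c' < n"
  shows "choi_tensor Ls r c r' c' = (if colour r c < m \<and> colour r' c' < m
    then of_real (sqrt (w r c) * sqrt (w r' c')) * coeff_gram Ls (colour r c) (colour r' c') else 0)"
proof (cases "colour r c < m \<and> colour r' c' < m")
  case True
  then have "choi_tensor Ls r c r' c' = (\<Sum>K\<leftarrow>Ls.
      of_real (sqrt (w r c) * sqrt (w r' c')) * (coeff K (colour r c) * cnj (coeff K (colour r' c'))))"
    unfolding choi_tensor_def by (intro arg_cong[where f = sum_list] map_cong refl) (simp add: face_entry idx)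
  then show ?thesis using True by (simp add: coeff_gram_def sum_list_const_mult)
next
  case False
  then have "choi_tensor Ls r c r' c' = (\<Sum>K\<leftarrow>Ls. 0)"
    unfolding choi_tensor_def by (intro arg_cong[where f = sum_list] map_cong refl) (auto simp: face_entry idx)
  then show ?thesis unfolding if_not_P[OF False] by simp
qed

lemma face_coeff_gram_off_diag:
  assumes ab: "a < m" "b < m" "a \<noteq> b"
  shows "coeff_gram Ls a b = 0"
proof -
  from colours_meet[OF ab(1,2)] consider
      (row) r c c' where "r < n" "c < n" "c' < n" "colour r c = a" "colour r c' = b"
    | (col) c r r' where "c < n" "r < n" "r' < n" "colour r c = a" "colour r' c = b"
    by blast
  then show ?thesis
  proof cases
    case row
    then have coloured: "colour r c < m" "colour r c' < m" and "c' \<noteq> c" using ab by auto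
    have "(\<Sum>i<n. choi_tensor Ls i c i c') = choi_tensor Ls r c r c'"
    proof (rule sum_lessThan_single[OF row(1)])
      fix i assume i: "i < n" "i \<noteq> r"
      then have "\<not> (colour i c < m \<and> colour i c' < m)"
        using no_rectangle[OF row(1) i(1) row(2,3) coloured] \<open>c' \<noteq> c\<close> by blast
      then show "choi_tensor Ls i c i c' = 0"
        by (simp only: face_choi_tensor[OF i(1) row(2) i(1) row(3)] if_not_P if_False)
    qed
    moreover have "(\<Sum>i<n. choi_tensor Ls i c i c') = 0"
      using sum_adjoint_mult_index[OF Ls row(3,2)] marg_in \<open>c' \<noteq> c\<close> row by (simp add: mat_diag_def)
    ultimately have "of_real (sqrt (w r c) * sqrt (w r c')) * coeff_gram Ls a b = 0"
      using face_choi_tensor[OF row(1,2) row(1,3)] coloured row(4,5) by simp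
    then show ?thesis using weight_pos[OF row(1,2) coloured(1)] weight_pos[OF row(1,3) coloured(2)] by simp
  next
    case col
    then have coloured: "colour r c < m" "colour r' c < m" and "r \<noteq> r'" using ab by auto
    have "(\<Sum>k<n. choi_tensor Ls r k r' k) = choi_tensor Ls r c r' c"
    proof (rule sum_lessThan_single[OF col(1)])
      fix k assume k: "k < n" "k \<noteq> c"
      then have "\<not> (colour r k < m \<and> colour r' k < m)"
        using no_rectangle[OF col(2,3,1) k(1) coloured(1) _ coloured(2)] \<open>r \<noteq> r'\<close> by blast
      then show "choi_tensor Ls r k r' k = 0"
        by (simp only: face_choi_tensor[OF col(2) k(1) col(3) k(1)] if_not_P if_False)
    qed
    moreover have "(\<Sum>k<n. choi_tensor Ls r k r' k) = 0"
      using sum_mult_adjoint_index[OF Ls col(2,3)] marg_out \<open>r \<noteq> r'\<close> col by (simp add: mat_diag_def)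
    ultimately have "of_real (sqrt (w r c) * sqrt (w r' c)) * coeff_gram Ls a b = 0"
      using face_choi_tensor[OF col(2,1) col(3,1)] coloured col(4,5) by simp
    then show ?thesis using weight_pos[OF col(2,1) coloured(1)] weight_pos[OF col(3,1) coloured(2)] by simp
  qed
qed

lemma face_coeff_gram_diag:
  assumes a: "a < m"
  shows "coeff_gram Ls a a = 1"
proof -
  define g where "g b = (\<Sum>K\<leftarrow>Ls. (cmod (coeff K b))\<^sup>2)" for b
  have gram: "coeff_gram Ls b b = of_real (g b)" for b
    by (simp add: coeff_gram_def g_def sum_list_mult_cnj)
  have diag: "choi_tensor Ls r c r c = of_real (if colour r c < m then w r c * g (colour r c) else 0)"
    if rc: "r < n" "c < n" for r c
  proof (cases "colour r c < m")
    case True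
    then show ?thesis using face_choi_tensor[OF rc rc] weight_pos[OF rc True] by (simp add: gram)
  qed (simp add: face_choi_tensor[OF rc rc])
  have "g a = 1"
  proof (rule weights_eq_one[OF _ _ a])
    fix c assume c: "c < n"
    have "(of_real (\<Sum>r<n. if colour r c < m then w r c * g (colour r c) else 0) :: complex)
        = of_real (col_weight c)"
      using sum_adjoint_mult_index[OF Ls c c] marg_in c by (simp add: mat_diag_def diag)
    then show "(\<Sum>r<n. if colour r c < m then w r c * g (colour r c) else 0) = col_weight c"
      by (simp only: of_real_eq_iff)
  next
    fix r assume r: "r < n"
    have "(of_real (\<Sum>c<n. if colour r c < m then w r c * g (colour r c) else 0) :: complex)
        = of_real (row_weight r)"
      using sum_mult_adjoint_index[OF Ls r r] marg_out r by (simp add: mat_diag_def diag)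
    then show "(\<Sum>c<n. if colour r c < m then w r c * g (colour r c) else 0) = row_weight r"
      by (simp only: of_real_eq_iff)
  qed
  then show ?thesis by (simp add: gram)
qed

lemma face_choi_tensor_eq:
  assumes idx: "r < n" "c < n" "r' < n" "c' < n"
  shows "choi_tensor Ls r c r' c' = choi_tensor kraus_ops r c r' c'"
proof (cases "colour r c < m \<and> colour r' c' < m")
  case True
  then show ?thesis
    using face_coeff_gram_diag face_coeff_gram_off_diag[of "colour r c" "colour r' c'"]
    by (cases "colour r' c' = colour r c") (simp_all add: face_choi_tensor[OF idx] choi_tensor_kraus_ops[OF idx])
next
  case False
  then have "\<not> (colour r c < m \<and> colour r' c' = colour r c)" by auto
  with False show ?thesis
    by (simp only: face_choi_tensor[OF idx] choi_tensor_kraus_ops[OF idx] if_not_P if_False)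
qed

end

theorem extreme_kraus_ops:
  "extreme_map n (CP_set n n (mat_diag n (\<lambda>c. of_real (col_weight c))) (mat_diag n (\<lambda>r. of_real (row_weight r))))
    (kraus_map n kraus_ops)"
  by (rule extreme_CP_setI[OF kraus_ops_carrier kraus_ops_in_CP_set]) (blast intro: face_choi_tensor_eq)

end

section \<open>The example\<close>

lemma all_less_six: "(\<forall>i<6. P i) \<longleftrightarrow> P 0 \<and> P 1 \<and> P 2 \<and> P 3 \<and> P 4 \<and> P (5::nat)"
  by (simp add: numeral_eq_Suc All_less_Suc conj_ac)
lemma all_less_eight: "(\<forall>i<8. P i) \<longleftrightarrow> P 0 \<and> P 1 \<and> P 2 \<and> P 3 \<and> P 4 \<and> P 5 \<and> P 6 \<and> P (7::nat)"
  by (simp add: numeral_eq_Suc All_less_Suc conj_ac)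
lemma sum_less_six: "(\<Sum>i<6. f i) = f 0 + f 1 + f 2 + f 3 + f 4 + f (5::nat)"
  by (simp add: numeral_eq_Suc)
lemma all_less_list_all: "(\<forall>i<n. P i) \<longleftrightarrow> list_all P [0..<n]"
  by (auto simp: list_all_iff)

lemma ex_less_list_ex: "(\<exists>i<n. P i) \<longleftrightarrow> list_ex P [0..<n]"
  by (auto simp: list_ex_iff)

text \<open>Colour 8 marks a blank cell. The row and column sums of \<open>9 * example_weight\<close> are
  \<open>1, 1, 1, 2, 2, 2\<close>, the diagonal of \<open>9 * D_mat\<close>.\<close>
definition example_colour :: "nat \<Rightarrow> nat \<Rightarrow> nat" where
  "example_colour r c = [[8, 8, 1, 3, 4, 8], [5, 8, 6, 8, 8, 2], [8, 8, 8, 5, 8, 4],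
     [1, 2, 8, 0, 8, 8], [8, 3, 8, 8, 6, 7], [7, 8, 8, 8, 0, 8]] ! r ! c"

definition example_weight :: "nat \<Rightarrow> nat \<Rightarrow> real" where
  "example_weight r c = [[0, 0, 1/3, 1/2, 1/6, 0], [1/6, 0, 2/3, 0, 0, 1/6], [0, 0, 0, 5/6, 0, 1/6],
     [1/2, 5/6, 0, 2/3, 0, 0], [0, 1/6, 0, 0, 1/6, 5/3], [1/3, 0, 0, 0, 5/3, 0]] ! r ! c / 9"

lemma example_weight_pos: "\<forall>r<6. \<forall>c<6. example_colour r c < 8 \<longrightarrow> 0 < example_weight r c"
  unfolding all_less_six by (simp add: example_colour_def example_weight_def)

lemma example_colour_inj_row:
  "\<forall>r<6. \<forall>c<6. \<forall>c'<6. example_colour r c < 8 \<and> example_colour r c = example_colour r c' \<longrightarrow> c = c'"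
  unfolding all_less_list_all by code_simp

lemma example_colour_inj_col:
  "\<forall>r<6. \<forall>r'<6. \<forall>c<6. example_colour r c < 8 \<and> example_colour r c = example_colour r' c \<longrightarrow> r = r'"
  unfolding all_less_list_all by code_simp

lemma example_no_rectangle:
  "\<forall>r<6. \<forall>r'<6. \<forall>c<6. \<forall>c'<6. example_colour r c < 8 \<and> example_colour r c' < 8 \<and>
     example_colour r' c < 8 \<and> example_colour r' c' < 8 \<longrightarrow> r = r' \<or> c = c'"
  unfolding all_less_list_all by code_simp

lemma example_colours_meet:
  "\<forall>a<8. \<forall>b<8. (\<exists>r<6. \<exists>c<6. \<exists>c'<6. example_colour r c = a \<and> example_colour r c' = b) \<or>
     (\<exists>c<6. \<exists>r<6. \<exists>r'<6. example_colour r c = a \<and> example_colour r' c = b)"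
  unfolding all_less_list_all ex_less_list_ex by code_simp

lemma example_weights_determine:
  assumes "\<forall>c<6. (\<Sum>r<6. if example_colour r c < 8 then example_weight r c * h (example_colour r c) else 0) = 0"
    and "\<forall>r<6. (\<Sum>c<6. if example_colour r c < 8 then example_weight r c * h (example_colour r c) else 0) = 0"
  shows "\<forall>a<8. h a = 0"
  using assms unfolding all_less_six all_less_eight sum_less_six
  by (simp add: example_colour_def example_weight_def)

interpretation example: coloured_grid 6 8 example_colour example_weight
proof
  show "0 < example_weight r c" if "r < 6" "c < 6" "example_colour r c < 8" for r c
    using example_weight_pos that by blast
  show "c = c'" if "r < 6" "c < 6" "c' < 6" "example_colour r c < 8" "example_colour r c = example_colour r c'"
    for r c c'
    using example_colour_inj_row that by blast
  show "r = r'" if "r < 6" "r' < 6" "c < 6" "example_colour r c < 8" "example_colour r c = example_colour r' c"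
    for r r' c
    using example_colour_inj_col that by blast
  show "r = r' \<or> c = c'" if "r < 6" "r' < 6" "c < 6" "c' < 6" "example_colour r c < 8" "example_colour r c' < 8"
    "example_colour r' c < 8" "example_colour r' c' < 8" for r r' c c'
    using example_no_rectangle that by blast
  show "(\<exists>r<6. \<exists>c<6. \<exists>c'<6. example_colour r c = a \<and> example_colour r c' = b) \<or>
      (\<exists>c<6. \<exists>r<6. \<exists>r'<6. example_colour r c = a \<and> example_colour r' c = b)" if "a < 8" "b < 8" for a b
    using example_colours_meet that by blast
  show "h a = 0" if "\<forall>c<6. (\<Sum>r<6. if example_colour r c < 8 then example_weight r c * h (example_colour r c) else 0) = 0"
    "\<forall>r<6. (\<Sum>c<6. if example_colour r c < 8 then example_weight r c * h (example_colour r c) else 0) = 0"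
    "a < 8" for h a
    using example_weights_determine[OF that(1,2)] that(3) by blast
qed

lemma D_mat_eq: "D_mat = mat_diag 6 (\<lambda>i. if i < 3 then 1/9 else 2/9)"
proof (rule eq_matI)
  have "\<forall>i<6. \<forall>j<6. D_mat $$ (i, j) = mat_diag 6 (\<lambda>i. if i < 3 then 1/9 else 2/9) $$ (i, j)"
    unfolding all_less_six by (simp add: D_mat_def kron_mat_def sigma_mat_def mat_diag_def)
  then show "D_mat $$ (i, j) = mat_diag 6 (\<lambda>i. if i < 3 then 1/9 else 2/9) $$ (i, j)"
    if "i < dim_row (mat_diag 6 (\<lambda>i. if i < 3 then 1/9 else 2/9 :: complex))"
      "j < dim_col (mat_diag 6 (\<lambda>i. if i < 3 then 1/9 else 2/9 :: complex))" for i j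
    using that by (simp add: mat_diag_def)
qed (simp_all add: D_mat_def kron_mat_def sigma_mat_def mat_diag_def)

lemma example_col_weight: "c < 6 \<Longrightarrow> example.col_weight c = (if c < 3 then 1/9 else 2/9)"
  using all_less_six[of "\<lambda>c. example.col_weight c = (if c < 3 then 1/9 else 2/9)"]
  by (simp add: example.col_weight_def sum_less_six example_colour_def example_weight_def)

lemma example_row_weight: "r < 6 \<Longrightarrow> example.row_weight r = (if r < 3 then 1/9 else 2/9)"
  using all_less_six[of "\<lambda>r. example.row_weight r = (if r < 3 then 1/9 else 2/9)"]
  by (simp add: example.row_weight_def sum_less_six example_colour_def example_weight_def)

theorem mainTheorem8:
  shows "\<exists>\<Phi>. extreme_map 6 (CP_set 6 6 D_mat D_mat) \<Phi> \<and> choi_rank 6 6 \<Phi> = 8"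
proof (intro exI conjI)
  have "mat_diag 6 (\<lambda>c. of_real (example.col_weight c)) = D_mat"
    "mat_diag 6 (\<lambda>r. of_real (example.row_weight r)) = D_mat"
    by (auto simp: D_mat_eq mat_diag_def example_col_weight example_row_weight)
  then show "extreme_map 6 (CP_set 6 6 D_mat D_mat) (kraus_map 6 example.kraus_ops)"
    using example.extreme_kraus_ops by simp
  show "choi_rank 6 6 (kraus_map 6 example.kraus_ops) = 8"
    by (rule example.choi_rank_kraus_ops)
qed

end
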